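(* Let $(X_i)_{i\in\mathbb N}$, $(X'_i)_{i\in\mathbb N}$ and $Y$ be mutually independent random variables with $(X_i)_{i\in\mathbb N}\sim(X'_i)_{i\in\mathbb N}$. Suppose that for some $k\in\mathbb N$ there exists $\lambda>0$ with \[\prod_{i=k}^\infty\mathbb E\Big[e^{\lambda(X'_i-X_i)}\Big]<\infty.\] Then \[\mathbb P\Big(\exists j\in\mathbb N:\ Y+\sum_{i=1}^{k+j}X_i\le\sum_{i=k}^{k+j}X'_i\Big)\le\Big(\prod_{i=k}^\infty\mathbb E\Big[e^{\lambda(X'_i-X_i)}\Big]\Big)\,\mathbb E\Big[e^{-\lambda\left(Y+\sum_{i=1}^{k-1}X_i\right)}\Big].\] *)

theory Defs
  imports "HOL-Probability.Probability"
begin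

definition all_vars :: "(nat \<Rightarrow> 'a \<Rightarrow> real) \<Rightarrow> (nat \<Rightarrow> 'a \<Rightarrow> real) \<Rightarrow> ('a \<Rightarrow> real)
    \<Rightarrow> nat + nat + unit \<Rightarrow> 'a \<Rightarrow> real" where
  "all_vars X X' Y z = (case z of Inl i \<Rightarrow> X i | Inr (Inl i) \<Rightarrow> X' i | Inr (Inr _) \<Rightarrow> Y)"

definition all_idx :: "(nat + nat + unit) set" where
  "all_idx = Inl ` {1..} \<union> Inr ` (Inl ` {1..}) \<union> {Inr (Inr ())}"

end

theory Submission
  imports Defs
begin

(* Put xi_(k-1) = -lam (Y + X_1 + ... + X_(k-1)) and xi_i = lam (X'_i - X_i) for i >= k. These are
   independent, and on the event some partial sum S_n = xi_(k-1) + ... + xi_n is nonnegative.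
   As X_i and X'_i are independent with the same law, E exp xi_i = E exp (lam X'_i) E exp (-lam X_i)
   does not change when X_i and X'_i are swapped, so it equals E exp (-xi_i) and hence is at least 1:
   exp S_n is a submartingale. Doob's maximal inequality at level 1 follows by splitting according
   to the first n with S_n >= 0: there exp S_n >= 1, and multiplying by the independent factor
   exp (S_N - S_n), whose mean is at least 1, gives P(first passage at n) <= E[exp S_N; first passage
   at n]. Summing over n bounds P(S_n >= 0 for some n <= N) by E exp S_N = prod_i E exp xi_i, and
   letting N tend to infinity gives the claim. *)

lemma (in prob_space) indep_var_nn_integral:
  fixes X1 X2 :: "'a \<Rightarrow> ennreal"
  assumes "indep_var borel X1 borel X2"
  shows "(\<integral>\<^sup>+\<omega>. X1 \<omega> * X2 \<omega> \<partial>M) = (\<integral>\<^sup>+\<omega>. X1 \<omega> \<partial>M) * (\<integral>\<^sup>+\<omega>. X2 \<omega> \<partial>M)"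
proof -
  have "indep_vars (\<lambda>_. borel) (case_bool X1 X2) UNIV"
    using assms unfolding indep_var_def by (simp add: bool.case_distrib[symmetric] case_bool_if)
  then have "(\<integral>\<^sup>+\<omega>. (\<Prod>b\<in>UNIV. case_bool X1 X2 b \<omega>) \<partial>M) = (\<Prod>b\<in>UNIV. \<integral>\<^sup>+\<omega>. case_bool X1 X2 b \<omega> \<partial>M)"
    by (intro indep_vars_nn_integral) auto
  then show ?thesis
    by (simp add: UNIV_bool mult.commute)
qed

lemma (in prob_space) indep_vars_nn_integral_restrict:
  fixes F G :: "('i \<Rightarrow> 'b) \<Rightarrow> ennreal"
  assumes "indep_vars M' X I" "A \<inter> B = {}" "A \<subseteq> I" "B \<subseteq> I"
    and "F \<in> borel_measurable (PiM A M')" "G \<in> borel_measurable (PiM B M')"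
  shows "(\<integral>\<^sup>+\<omega>. F (restrict (\<lambda>i. X i \<omega>) A) * G (restrict (\<lambda>i. X i \<omega>) B) \<partial>M)
       = (\<integral>\<^sup>+\<omega>. F (restrict (\<lambda>i. X i \<omega>) A) \<partial>M) * (\<integral>\<^sup>+\<omega>. G (restrict (\<lambda>i. X i \<omega>) B) \<partial>M)"
  using indep_var_nn_integral[OF indep_var_compose[OF indep_var_restrict[OF assms(1-4)] assms(5,6)]]
  by (simp add: comp_def)

lemma (in prob_space) nn_integral_exp_ge_1_of_symmetric:
  fixes D :: "'a \<Rightarrow> real"
  assumes [measurable]: "random_variable borel D"
    and symm: "(\<integral>\<^sup>+\<omega>. exp (D \<omega>) \<partial>M) = (\<integral>\<^sup>+\<omega>. exp (- D \<omega>) \<partial>M)"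
  shows "1 \<le> (\<integral>\<^sup>+\<omega>. exp (D \<omega>) \<partial>M)"
proof -
  have "2 = (\<integral>\<^sup>+\<omega>. 2 \<partial>M)"
    by (simp add: emeasure_space_1)
  also have "\<dots> \<le> (\<integral>\<^sup>+\<omega>. ennreal (exp (D \<omega>)) + ennreal (exp (- D \<omega>)) \<partial>M)"
  proof (intro nn_integral_mono)
    fix \<omega>
    have "2 \<le> exp (D \<omega>) + exp (- D \<omega>)"
      using exp_ge_add_one_self[of "D \<omega>"] exp_ge_add_one_self[of "- D \<omega>"] by linarith
    then show "2 \<le> ennreal (exp (D \<omega>)) + ennreal (exp (- D \<omega>))"
      by (simp flip: ennreal_plus add: ennreal_leI del: ennreal_plus)
  qed
  also have "\<dots> = 2 * (\<integral>\<^sup>+\<omega>. exp (D \<omega>) \<partial>M)"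
    by (simp add: nn_integral_add symm mult_2)
  finally show ?thesis
    using ennreal_mult_le_mult_iff[of 2 1] by simp
qed

lemma (in prob_space) nn_integral_exp_diff_ge_1:
  fixes X X' :: "'a \<Rightarrow> real"
  assumes indep: "indep_var borel X borel X'"
    and same_distr: "distr M borel X = distr M borel X'"
  shows "1 \<le> (\<integral>\<^sup>+\<omega>. exp (c * (X' \<omega> - X \<omega>)) \<partial>M)"
proof -
  note rv[measurable] = indep_var_rv1[OF indep] indep_var_rv2[OF indep]
  have product: "(\<integral>\<^sup>+\<omega>. ennreal (exp (a * X \<omega>)) * ennreal (exp (b * X' \<omega>)) \<partial>M)
      = (\<integral>\<^sup>+\<omega>. exp (a * X \<omega>) \<partial>M) * (\<integral>\<^sup>+\<omega>. exp (b * X' \<omega>) \<partial>M)" for a b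
    using indep_var_nn_integral[OF indep_var_compose[OF indep,
        of "\<lambda>x. ennreal (exp (a * x))" borel "\<lambda>x. ennreal (exp (b * x))" borel]]
    by (simp add: comp_def)
  have swap: "(\<integral>\<^sup>+\<omega>. exp (a * X \<omega>) \<partial>M) = (\<integral>\<^sup>+\<omega>. exp (a * X' \<omega>) \<partial>M)" for a
    using nn_integral_distr[where M=M and T=X and M'=borel and f="\<lambda>x. ennreal (exp (a * x))"]
      nn_integral_distr[where M=M and T=X' and M'=borel and f="\<lambda>x. ennreal (exp (a * x))"]
    by (simp add: same_distr)
  have "(\<integral>\<^sup>+\<omega>. exp (c * (X' \<omega> - X \<omega>)) \<partial>M)
      = (\<integral>\<^sup>+\<omega>. ennreal (exp (- c * X \<omega>)) * ennreal (exp (c * X' \<omega>)) \<partial>M)"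
    by (simp add: algebra_simps flip: ennreal_mult' exp_add)
  also have "\<dots> = (\<integral>\<^sup>+\<omega>. exp (- c * X \<omega>) \<partial>M) * (\<integral>\<^sup>+\<omega>. exp (c * X' \<omega>) \<partial>M)"
    by (rule product)
  also have "\<dots> = (\<integral>\<^sup>+\<omega>. exp (c * X \<omega>) \<partial>M) * (\<integral>\<^sup>+\<omega>. exp (- c * X' \<omega>) \<partial>M)"
    by (simp only: swap mult.commute)
  also have "\<dots> = (\<integral>\<^sup>+\<omega>. ennreal (exp (c * X \<omega>)) * ennreal (exp (- c * X' \<omega>)) \<partial>M)"
    by (rule product[symmetric])
  also have "\<dots> = (\<integral>\<^sup>+\<omega>. exp (- (c * (X' \<omega> - X \<omega>))) \<partial>M)"
    by (simp add: algebra_simps flip: ennreal_mult' exp_add)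
  finally show ?thesis
    by (intro nn_integral_exp_ge_1_of_symmetric) simp_all
qed

lemma sum_of_bool_first_index:
  fixes a N :: nat
  shows "(\<Sum>n\<in>{a..N}. of_bool (P n \<and> (\<forall>j\<in>{a..<n}. \<not> P j)) :: 'b::semiring_1)
     = of_bool (\<exists>n\<in>{a..N}. P n)"
proof (induction N)
  case (Suc N)
  show ?case
  proof (cases "a \<le> Suc N")
    case True
    then have "{a..Suc N} = insert (Suc N) {a..N}"
      by auto
    moreover have "{a..<Suc N} = {a..N}"
      by auto
    ultimately show ?thesis
      using Suc.IH by (cases "\<exists>n\<in>{a..N}. P n") (auto simp del: sum_of_bool_eq)
  qed simp
qed (cases "a = 0", simp_all del: sum_of_bool_eq)

definition first_nonneg_partial_sum :: "nat \<Rightarrow> nat \<Rightarrow> (nat \<Rightarrow> real) \<Rightarrow> bool" where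
  "first_nonneg_partial_sum a n x \<longleftrightarrow>
     0 \<le> (\<Sum>i=a..n. x i) \<and> (\<forall>j\<in>{a..<n}. (\<Sum>i=a..j. x i) < 0)"

lemma first_nonneg_partial_sum_restrict:
  "first_nonneg_partial_sum a n (restrict x {a..n}) = first_nonneg_partial_sum a n x"
proof -
  have "(\<Sum>i=a..j. restrict x {a..n} i) = (\<Sum>i=a..j. x i)" if "j \<le> n" for j
    using that by (intro sum.cong) auto
  then show ?thesis
    unfolding first_nonneg_partial_sum_def by auto
qed

lemma borel_measurable_partial_sum:
  fixes a j n :: nat
  shows "j \<le> n \<Longrightarrow> (\<lambda>x. \<Sum>i=a..j. x i :: real) \<in> borel_measurable (PiM {a..n} (\<lambda>_. borel))"
  by (rule borel_measurable_sum[where f = "\<lambda>i x. x i"],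
      rule measurable_component_singleton[where M = "\<lambda>_. borel"]) auto

lemma measurable_first_nonneg_partial_sum:
  "Measurable.pred (PiM {a..n} (\<lambda>_. borel)) (first_nonneg_partial_sum a n)"
  unfolding first_nonneg_partial_sum_def
  by (intro pred_intros_logic(3) pred_intros_finite(3) borel_measurable_le borel_measurable_less
      borel_measurable_partial_sum measurable_const) auto

lemma pred_first_nonneg_partial_sum:
  assumes "\<And>i. i \<in> {a..n} \<Longrightarrow> \<xi> i \<in> borel_measurable M"
  shows "Measurable.pred M (\<lambda>\<omega>. first_nonneg_partial_sum a n (\<lambda>i. \<xi> i \<omega>))"
proof -
  have "(\<lambda>\<omega>. restrict (\<lambda>i. \<xi> i \<omega>) {a..n}) \<in> measurable M (PiM {a..n} (\<lambda>_. borel))"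
    using assms by (intro measurable_restrict) auto
  from measurable_compose[OF this measurable_first_nonneg_partial_sum] show ?thesis
    by (simp add: first_nonneg_partial_sum_restrict)
qed

lemma pred_exists_nonneg_partial_sum:
  fixes a N :: nat and \<xi> :: "nat \<Rightarrow> 'a \<Rightarrow> real"
  assumes "\<And>i. i \<in> {a..N} \<Longrightarrow> \<xi> i \<in> borel_measurable M"
  shows "Measurable.pred M (\<lambda>\<omega>. \<exists>n\<in>{a..N}. 0 \<le> (\<Sum>i=a..n. \<xi> i \<omega>))"
  using assms unfolding pred_def
  by (intro pred_intros_finite(4)[unfolded pred_def] borel_measurable_le borel_measurable_sum
      measurable_const) auto

lemma (in prob_space) nn_integral_prod_exp_indep:
  fixes \<xi> :: "'i \<Rightarrow> 'a \<Rightarrow> real"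
  assumes "indep_vars (\<lambda>_. borel) \<xi> I" "finite J" "J \<subseteq> I"
  shows "(\<integral>\<^sup>+\<omega>. (\<Prod>i\<in>J. ennreal (exp (\<xi> i \<omega>))) \<partial>M) = (\<Prod>i\<in>J. \<integral>\<^sup>+\<omega>. exp (\<xi> i \<omega>) \<partial>M)"
proof -
  have "indep_vars (\<lambda>_. borel) (\<lambda>i \<omega>. ennreal (exp (\<xi> i \<omega>))) J"
    by (rule indep_vars_compose2[OF indep_vars_subset[OF assms(1,3)]]) simp
  then show ?thesis
    using assms(2) by (intro indep_vars_nn_integral) auto
qed

lemma exp_sum_split_at:
  fixes x :: "nat \<Rightarrow> real"
  assumes "n \<in> {a..N}"
  shows "exp (\<Sum>i=a..N. x i) = exp (\<Sum>i=a..n. x i) * (\<Prod>i\<in>{n<..N}. exp (x i))"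
proof -
  have "{a..N} = {a..n} \<union> {n<..N}" "{a..n} \<inter> {n<..N} = {}"
    using assms by auto
  then have "(\<Sum>i=a..N. x i) = (\<Sum>i=a..n. x i) + (\<Sum>i\<in>{n<..N}. x i)"
    by (simp add: sum.union_disjoint)
  then show ?thesis
    by (simp add: exp_add exp_sum)
qed

lemma (in prob_space) emeasure_first_nonneg_partial_sum_le:
  fixes \<xi> :: "nat \<Rightarrow> 'a \<Rightarrow> real"
  assumes indep: "indep_vars (\<lambda>_. borel) \<xi> {a..N}"
    and mgf_ge_1: "\<And>i. i \<in> {a<..N} \<Longrightarrow> 1 \<le> (\<integral>\<^sup>+\<omega>. exp (\<xi> i \<omega>) \<partial>M)"
    and n: "n \<in> {a..N}"
  defines "A \<equiv> {\<omega> \<in> space M. first_nonneg_partial_sum a n (\<lambda>i. \<xi> i \<omega>)}"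
  shows "emeasure M A \<le> (\<integral>\<^sup>+\<omega>. indicator A \<omega> * ennreal (exp (\<Sum>i=a..N. \<xi> i \<omega>)) \<partial>M)"
proof -
  define F where "F x = indicator {x. first_nonneg_partial_sum a n x} x * ennreal (exp (\<Sum>i=a..n. x i))"
    for x :: "nat \<Rightarrow> real"
  define G where "G x = (\<Prod>i\<in>{n<..N}. ennreal (exp (x i)))" for x :: "nat \<Rightarrow> real"
  let ?past = "\<lambda>\<omega>. restrict (\<lambda>i. \<xi> i \<omega>) {a..n}" and ?future = "\<lambda>\<omega>. restrict (\<lambda>i. \<xi> i \<omega>) {n<..N}"
  have [measurable]: "F \<in> borel_measurable (PiM {a..n} (\<lambda>_. borel))"
    unfolding F_def using measurable_first_nonneg_partial_sum borel_measurable_partial_sum[of n n a]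
    by measurable
  have [measurable]: "G \<in> borel_measurable (PiM {n<..N} (\<lambda>_. borel))"
    unfolding G_def by measurable
  have "A \<in> sets M"
    unfolding A_def using indep n
    by (intro pred_first_nonneg_partial_sum[unfolded pred_def]) (auto simp: indep_vars_def)
  have F_past: "F (?past \<omega>) = indicator A \<omega> * ennreal (exp (\<Sum>i=a..n. \<xi> i \<omega>))" if "\<omega> \<in> space M" for \<omega>
    using that by (simp add: F_def A_def first_nonneg_partial_sum_restrict indicator_def)
  have G_future: "G (?future \<omega>) = (\<Prod>i\<in>{n<..N}. ennreal (exp (\<xi> i \<omega>)))" for \<omega>
    by (simp add: G_def)
  have "1 \<le> (\<Prod>i\<in>{n<..N}. \<integral>\<^sup>+\<omega>. exp (\<xi> i \<omega>) \<partial>M)"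
    using n by (intro prod_ge_1 mgf_ge_1) auto
  also have "\<dots> = (\<integral>\<^sup>+\<omega>. G (?future \<omega>) \<partial>M)"
    unfolding G_future using n by (intro nn_integral_prod_exp_indep[OF indep, symmetric]) auto
  finally have future_ge_1: "1 \<le> (\<integral>\<^sup>+\<omega>. G (?future \<omega>) \<partial>M)" .
  have "emeasure M A = (\<integral>\<^sup>+\<omega>. indicator A \<omega> \<partial>M)"
    using \<open>A \<in> sets M\<close> by simp
  also have "\<dots> \<le> (\<integral>\<^sup>+\<omega>. F (?past \<omega>) \<partial>M)"
    by (intro nn_integral_mono) (auto simp: F_past A_def first_nonneg_partial_sum_def indicator_def)
  also have "\<dots> \<le> (\<integral>\<^sup>+\<omega>. F (?past \<omega>) \<partial>M) * (\<integral>\<^sup>+\<omega>. G (?future \<omega>) \<partial>M)"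
    using mult_left_mono[OF future_ge_1] by simp
  also have "\<dots> = (\<integral>\<^sup>+\<omega>. F (?past \<omega>) * G (?future \<omega>) \<partial>M)"
    using n by (intro indep_vars_nn_integral_restrict[OF indep, symmetric]) auto
  also have "\<dots> = (\<integral>\<^sup>+\<omega>. indicator A \<omega> * ennreal (exp (\<Sum>i=a..N. \<xi> i \<omega>)) \<partial>M)"
    using exp_sum_split_at[OF n]
    by (intro nn_integral_cong) (simp add: F_past G_future prod_ennreal ennreal_mult' mult.assoc)
  finally show ?thesis .
qed

theorem (in prob_space) emeasure_exists_nonneg_partial_sum_le:
  fixes \<xi> :: "nat \<Rightarrow> 'a \<Rightarrow> real"
  assumes indep: "indep_vars (\<lambda>_. borel) \<xi> {a..N}"
    and mgf_ge_1: "\<And>i. i \<in> {a<..N} \<Longrightarrow> 1 \<le> (\<integral>\<^sup>+\<omega>. exp (\<xi> i \<omega>) \<partial>M)"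
  shows "emeasure M {\<omega> \<in> space M. \<exists>n\<in>{a..N}. 0 \<le> (\<Sum>i=a..n. \<xi> i \<omega>)}
           \<le> (\<Prod>i=a..N. \<integral>\<^sup>+\<omega>. exp (\<xi> i \<omega>) \<partial>M)"
proof -
  define A where "A n = {\<omega> \<in> space M. first_nonneg_partial_sum a n (\<lambda>i. \<xi> i \<omega>)}" for n
  define E where "E = {\<omega> \<in> space M. \<exists>n\<in>{a..N}. 0 \<le> (\<Sum>i=a..n. \<xi> i \<omega>)}"
  define W where "W \<omega> = ennreal (exp (\<Sum>i=a..N. \<xi> i \<omega>))" for \<omega>
  have rv: "\<And>i. i \<in> {a..N} \<Longrightarrow> random_variable borel (\<xi> i)"
    using indep by (simp add: indep_vars_def)
  have A_sets: "A n \<in> sets M" if "n \<in> {a..N}" for n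
    unfolding A_def using that rv by (intro pred_first_nonneg_partial_sum[unfolded pred_def]) auto
  have E_sets: "E \<in> sets M"
    unfolding E_def using rv by (intro pred_exists_nonneg_partial_sum[unfolded pred_def]) auto
  have "(\<lambda>\<omega>. \<Sum>i=a..N. \<xi> i \<omega>) \<in> borel_measurable M"
    using rv by (intro borel_measurable_sum) auto
  then have W_meas: "W \<in> borel_measurable M"
    unfolding W_def by measurable
  have first_passage: "indicator E \<omega> = (\<Sum>n\<in>{a..N}. indicator (A n) \<omega> :: ennreal)" if "\<omega> \<in> space M" for \<omega>
    using sum_of_bool_first_index[where P = "\<lambda>n. 0 \<le> (\<Sum>i=a..n. \<xi> i \<omega>)" and a = a and N = N and 'b = ennreal] that
    by (simp add: E_def A_def indicator_def first_nonneg_partial_sum_def not_le del: sum_of_bool_eq)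
  have "emeasure M E = (\<integral>\<^sup>+\<omega>. (\<Sum>n\<in>{a..N}. indicator (A n) \<omega>) \<partial>M)"
    using E_sets by (simp add: first_passage nn_integral_indicator[symmetric] cong: nn_integral_cong)
  also have "\<dots> = (\<Sum>n\<in>{a..N}. emeasure M (A n))"
    using A_sets by (subst nn_integral_sum) auto
  also have "\<dots> \<le> (\<Sum>n\<in>{a..N}. \<integral>\<^sup>+\<omega>. indicator (A n) \<omega> * W \<omega> \<partial>M)"
    unfolding A_def W_def
    by (intro sum_mono emeasure_first_nonneg_partial_sum_le[OF indep mgf_ge_1])
  also have "\<dots> = (\<integral>\<^sup>+\<omega>. (\<Sum>n\<in>{a..N}. indicator (A n) \<omega> * W \<omega>) \<partial>M)"
    using A_sets W_meas by (intro nn_integral_sum[symmetric]) auto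
  also have "\<dots> = (\<integral>\<^sup>+\<omega>. indicator E \<omega> * W \<omega> \<partial>M)"
    by (intro nn_integral_cong) (simp only: first_passage sum_distrib_right)
  also have "\<dots> \<le> (\<integral>\<^sup>+\<omega>. W \<omega> \<partial>M)"
    by (intro nn_integral_mono) (simp add: indicator_def)
  also have "\<dots> = (\<Prod>i=a..N. \<integral>\<^sup>+\<omega>. exp (\<xi> i \<omega>) \<partial>M)"
    unfolding W_def exp_sum[OF finite_atLeastAtMost] prod_ennreal[symmetric, OF exp_ge_zero]
    using nn_integral_prod_exp_indep[OF indep] by simp
  finally show ?thesis
    unfolding E_def .
qed

lemma partial_prod_le_lim:
  fixes f :: "nat \<Rightarrow> 'b::{linordered_nonzero_semiring, linorder_topology}"
  assumes ge_1: "\<And>i. k \<le> i \<Longrightarrow> 1 \<le> f i"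
    and lim: "(\<lambda>n. \<Prod>i=k..n. f i) \<longlonglongrightarrow> L"
  shows "(\<Prod>i=k..n. f i) \<le> L"
proof (rule incseq_le[OF incseq_SucI lim])
  fix n
  show "(\<Prod>i=k..n. f i) \<le> (\<Prod>i=k..Suc n. f i)"
  proof (cases "k \<le> Suc n")
    case True
    then have "(\<Prod>i=k..Suc n. f i) = f (Suc n) * (\<Prod>i=k..n. f i)"
      by (simp add: atLeastAtMostSuc_conv)
    moreover have "0 \<le> (\<Prod>i=k..n. f i)"
      using prod_ge_1[of "{k..n}" f] ge_1 by (simp add: order_trans[OF zero_le_one])
    ultimately show ?thesis
      using mult_right_mono[OF ge_1[of "Suc n"]] True by simp
  qed simp
qed

locale indep_copy_walks = prob_space +
  fixes X X' :: "nat \<Rightarrow> 'a \<Rightarrow> real" and Y :: "'a \<Rightarrow> real"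
  assumes indep: "indep_vars (\<lambda>_. borel) (all_vars X X' Y) all_idx"
    and same_distr: "distr M (PiM {1..} (\<lambda>_. borel)) (\<lambda>\<omega>. \<lambda>i\<in>{1..}. X i \<omega>)
                   = distr M (PiM {1..} (\<lambda>_. borel)) (\<lambda>\<omega>. \<lambda>i\<in>{1..}. X' i \<omega>)"
begin

lemma random_variable_all_vars: "z \<in> all_idx \<Longrightarrow> random_variable borel (all_vars X X' Y z)"
  using indep unfolding indep_vars_def by auto

lemma random_variable_X: "1 \<le> i \<Longrightarrow> random_variable borel (X i)"
  using random_variable_all_vars[of "Inl i"] by (simp add: all_idx_def all_vars_def)

lemma random_variable_X': "1 \<le> i \<Longrightarrow> random_variable borel (X' i)"
  using random_variable_all_vars[of "Inr (Inl i)"] by (simp add: all_idx_def all_vars_def)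

lemma indep_var_X_X':
  assumes "1 \<le> i"
  shows "indep_var borel (X i) borel (X' i)"
proof -
  have "indep_var (PiM {Inl i} (\<lambda>_. borel)) (\<lambda>\<omega>. restrict (\<lambda>z. all_vars X X' Y z \<omega>) {Inl i})
                  (PiM {Inr (Inl i)} (\<lambda>_. borel)) (\<lambda>\<omega>. restrict (\<lambda>z. all_vars X X' Y z \<omega>) {Inr (Inl i)})"
    using assms by (intro indep_var_restrict[OF indep]) (auto simp: all_idx_def)
  from indep_var_compose[OF this, of "\<lambda>x. x (Inl i)" borel "\<lambda>x. x (Inr (Inl i))" borel]
  show ?thesis
    by (simp add: comp_def all_vars_def)
qed

lemma distr_X_eq_distr_X':
  assumes "1 \<le> i"
  shows "distr M borel (X i) = distr M borel (X' i)"
proof -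
  have "distr M borel (Z i) = distr (distr M (PiM {1..} (\<lambda>_. borel)) (\<lambda>\<omega>. \<lambda>i\<in>{1..}. Z i \<omega>)) borel (\<lambda>x. x i)"
    if "\<And>i. 1 \<le> i \<Longrightarrow> random_variable borel (Z i)" for Z
    using assms that by (subst distr_distr) (auto intro!: measurable_restrict simp: comp_def)
  then show ?thesis
    using random_variable_X random_variable_X' same_distr by metis
qed

lemma nn_integral_exp_increment_ge_1:
  "1 \<le> i \<Longrightarrow> 1 \<le> (\<integral>\<^sup>+\<omega>. exp (lam * (X' i \<omega> - X i \<omega>)) \<partial>M)"
  by (intro nn_integral_exp_diff_ge_1 indep_var_X_X' distr_X_eq_distr_X')

(* Only the index k - 1 of the first branch is ever used: it carries the starting value. *)
definition step :: "nat \<Rightarrow> real \<Rightarrow> nat \<Rightarrow> 'a \<Rightarrow> real" where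
  "step k lam i \<omega> =
     (if i < k then - lam * (Y \<omega> + (\<Sum>j=1..k-1. X j \<omega>)) else lam * (X' i \<omega> - X i \<omega>))"

lemma indep_vars_step:
  assumes "1 \<le> k"
  shows "indep_vars (\<lambda>_. borel) (step k lam) {k-1..N}"
proof -
  define K where "K i = (if i < k then insert (Inr (Inr ())) (Inl ` {1..k-1}) else {Inl i, Inr (Inl i)})"
    for i :: nat
  define g where "g i = (\<lambda>x :: nat + nat + unit \<Rightarrow> real.
      if i < k then - lam * (x (Inr (Inr ())) + (\<Sum>j=1..k-1. x (Inl j)))
      else lam * (x (Inr (Inl i)) - x (Inl i)))" for i
  have "indep_vars (\<lambda>i. PiM (K i) (\<lambda>_. borel)) (\<lambda>i \<omega>. restrict (\<lambda>z. all_vars X X' Y z \<omega>) (K i)) {k-1..N}"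
    using assms by (intro indep_vars_restrict[OF indep]) (auto simp: K_def all_idx_def disjoint_family_on_def)
  moreover have "g i \<in> borel_measurable (PiM (K i) (\<lambda>_. borel))" for i
  proof (cases "i < k")
    case True
    have "(\<lambda>x. - lam * (x (Inr (Inr ())) + (\<Sum>j=1..k-1. x (Inl j))))
            \<in> borel_measurable (PiM (insert (Inr (Inr ())) (Inl ` {1..k-1})) (\<lambda>_. borel))"
      by (intro borel_measurable_times borel_measurable_add borel_measurable_sum measurable_const
          measurable_component_singleton[where M = "\<lambda>_. borel"]) auto
    with True show ?thesis
      by (simp add: g_def K_def)
  next
    case False
    then show ?thesis
      unfolding g_def K_def by simp
  qed
  ultimately have "indep_vars (\<lambda>_. borel) (\<lambda>i \<omega>. g i (restrict (\<lambda>z. all_vars X X' Y z \<omega>) (K i))) {k-1..N}"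
    by (rule indep_vars_compose2)
  then show ?thesis
    by (rule indep_vars_cong[THEN iffD1, rotated -1]) (auto simp: g_def K_def step_def all_vars_def)
qed

lemma sum_step_nonneg_iff:
  assumes "1 \<le> k" "k \<le> n" "0 < lam"
  shows "0 \<le> (\<Sum>i=k-1..n. step k lam i \<omega>) \<longleftrightarrow> Y \<omega> + (\<Sum>i=1..n. X i \<omega>) \<le> (\<Sum>i=k..n. X' i \<omega>)"
proof -
  have "{1..n} = {1..k-1} \<union> {k..n}" "{1..k-1} \<inter> {k..n} = {}"
    using assms by auto
  then have split: "(\<Sum>i=1..n. X i \<omega>) = (\<Sum>i=1..k-1. X i \<omega>) + (\<Sum>i=k..n. X i \<omega>)"
    by (simp add: sum.union_disjoint)
  have "(\<Sum>i=k-1..n. step k lam i \<omega>) = step k lam (k-1) \<omega> + (\<Sum>i=k..n. step k lam i \<omega>)"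
    using assms by (subst sum.atLeast_Suc_atMost) auto
  also have "\<dots> = - lam * (Y \<omega> + (\<Sum>i=1..k-1. X i \<omega>)) + lam * ((\<Sum>i=k..n. X' i \<omega>) - (\<Sum>i=k..n. X i \<omega>))"
    using assms by (simp add: step_def sum_subtractf flip: sum_distrib_left)
  also have "\<dots> = lam * ((\<Sum>i=k..n. X' i \<omega>) - (Y \<omega> + (\<Sum>i=1..n. X i \<omega>)))"
    unfolding split by (simp add: algebra_simps)
  finally show ?thesis
    using assms by (simp add: zero_le_mult_iff)
qed

definition reached :: "nat \<Rightarrow> real \<Rightarrow> nat \<Rightarrow> 'a set" where
  "reached k lam N = {\<omega> \<in> space M. \<exists>n\<in>{k-1..N}. 0 \<le> (\<Sum>i=k-1..n. step k lam i \<omega>)}"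

lemma sets_reached:
  assumes "1 \<le> k"
  shows "reached k lam N \<in> sets M"
  using indep_vars_step[OF assms, of lam N] unfolding reached_def indep_vars_def
  by (intro pred_exists_nonneg_partial_sum[unfolded pred_def]) auto

lemma subset_UN_reached:
  assumes "1 \<le> k" "0 < lam"
  shows "{\<omega> \<in> space M. \<exists>j\<ge>1. Y \<omega> + (\<Sum>i=1..k+j. X i \<omega>) \<le> (\<Sum>i=k..k+j. X' i \<omega>)}
           \<subseteq> (\<Union>N. reached k lam N)"
proof safe
  fix \<omega> j assume "\<omega> \<in> space M" "1 \<le> j" "Y \<omega> + (\<Sum>i=1..k+j. X i \<omega>) \<le> (\<Sum>i=k..k+j. X' i \<omega>)"
  with sum_step_nonneg_iff[OF assms(1) _ assms(2), of "k + j" \<omega>]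
  have "\<omega> \<in> reached k lam (k + j)"
    by (auto simp: reached_def)
  then show "\<omega> \<in> (\<Union>N. reached k lam N)"
    by auto
qed

lemma emeasure_reached_le:
  assumes "1 \<le> k"
  shows "emeasure M (reached k lam N)
    \<le> (\<integral>\<^sup>+\<omega>. exp (- lam * (Y \<omega> + (\<Sum>i=1..k-1. X i \<omega>))) \<partial>M)
        * (\<Prod>i=k..N. \<integral>\<^sup>+\<omega>. exp (lam * (X' i \<omega> - X i \<omega>)) \<partial>M)"
proof (cases "k - 1 \<le> N")
  case True
  have "emeasure M (reached k lam N) \<le> (\<Prod>i=k-1..N. \<integral>\<^sup>+\<omega>. exp (step k lam i \<omega>) \<partial>M)"
    unfolding reached_def
  proof (intro emeasure_exists_nonneg_partial_sum_le indep_vars_step assms)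
    fix i assume "i \<in> {k-1<..N}"
    then have "k \<le> i"
      by auto
    then show "1 \<le> (\<integral>\<^sup>+\<omega>. exp (step k lam i \<omega>) \<partial>M)"
      using assms by (simp add: step_def nn_integral_exp_increment_ge_1)
  qed
  also have "\<dots> = (\<integral>\<^sup>+\<omega>. exp (- lam * (Y \<omega> + (\<Sum>i=1..k-1. X i \<omega>))) \<partial>M)
        * (\<Prod>i=k..N. \<integral>\<^sup>+\<omega>. exp (lam * (X' i \<omega> - X i \<omega>)) \<partial>M)"
    using True assms by (simp add: prod.atLeast_Suc_atMost step_def)
  finally show ?thesis .
qed (simp add: reached_def)

lemma emeasure_UN_reached_le:
  assumes "1 \<le> k"
    and bound: "\<And>N. (\<Prod>i=k..N. \<integral>\<^sup>+\<omega>. exp (lam * (X' i \<omega> - X i \<omega>)) \<partial>M) \<le> L"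
  shows "emeasure M (\<Union>N. reached k lam N)
           \<le> L * (\<integral>\<^sup>+\<omega>. exp (- lam * (Y \<omega> + (\<Sum>i=1..k-1. X i \<omega>))) \<partial>M)"
proof -
  have "emeasure M (\<Union>N. reached k lam N) = (SUP N. emeasure M (reached k lam N))"
    using sets_reached[OF assms(1)]
    by (intro SUP_emeasure_incseq[symmetric]) (auto simp: incseq_def reached_def)
  also have "\<dots> \<le> L * (\<integral>\<^sup>+\<omega>. exp (- lam * (Y \<omega> + (\<Sum>i=1..k-1. X i \<omega>))) \<partial>M)"
  proof (rule SUP_least)
    fix N
    show "emeasure M (reached k lam N) \<le> L * (\<integral>\<^sup>+\<omega>. exp (- lam * (Y \<omega> + (\<Sum>i=1..k-1. X i \<omega>))) \<partial>M)"
      using order_trans[OF emeasure_reached_le[OF assms(1)] mult_left_mono[OF bound]]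
      by (simp add: mult.commute)
  qed
  finally show ?thesis .
qed

end

theorem lemma3p4:
  fixes M :: "'a measure"
    and X X' :: "nat \<Rightarrow> 'a \<Rightarrow> real"
    and Y :: "'a \<Rightarrow> real"
    and k :: nat and lam :: real and L :: ennreal
  assumes "prob_space M"
    and indep: "prob_space.indep_vars M (\<lambda>_. borel) (all_vars X X' Y) all_idx"
    and same_distr: "distr M (PiM {1..} (\<lambda>_. borel)) (\<lambda>\<omega>. \<lambda>i\<in>{1..}. X i \<omega>)
                   = distr M (PiM {1..} (\<lambda>_. borel)) (\<lambda>\<omega>. \<lambda>i\<in>{1..}. X' i \<omega>)"
    and "k \<ge> 1"
    and "lam > 0"
    and prod_lim: "(\<lambda>n. \<Prod>i\<in>{k..n}. \<integral>\<^sup>+ \<omega>. ennreal (exp (lam * (X' i \<omega> - X i \<omega>))) \<partial>M)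
                    \<longlonglongrightarrow> L"
    and "L < \<infinity>"
  shows "emeasure M {\<omega> \<in> space M. \<exists>j\<ge>1.
            Y \<omega> + (\<Sum>i=1..k+j. X i \<omega>) \<le> (\<Sum>i=k..k+j. X' i \<omega>)}
         \<le> L * (\<integral>\<^sup>+ \<omega>. ennreal (exp (- lam * (Y \<omega> + (\<Sum>i=1..k-1. X i \<omega>)))) \<partial>M)"
proof -
  interpret indep_copy_walks M X X' Y
    using assms by (simp add: indep_copy_walks_def indep_copy_walks_axioms_def)
  have "(\<Prod>i=k..N. \<integral>\<^sup>+\<omega>. exp (lam * (X' i \<omega> - X i \<omega>)) \<partial>M) \<le> L" for N
    using assms by (intro partial_prod_le_lim[OF _ prod_lim] nn_integral_exp_increment_ge_1) auto
  then have "emeasure M (\<Union>N. reached k lam N)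
      \<le> L * (\<integral>\<^sup>+ \<omega>. ennreal (exp (- lam * (Y \<omega> + (\<Sum>i=1..k-1. X i \<omega>)))) \<partial>M)"
    by (rule emeasure_UN_reached_le[OF \<open>k \<ge> 1\<close>])
  moreover have "emeasure M {\<omega> \<in> space M. \<exists>j\<ge>1.
      Y \<omega> + (\<Sum>i=1..k+j. X i \<omega>) \<le> (\<Sum>i=k..k+j. X' i \<omega>)} \<le> emeasure M (\<Union>N. reached k lam N)"
    using subset_UN_reached[OF \<open>k \<ge> 1\<close> \<open>lam > 0\<close>] sets_reached[OF \<open>k \<ge> 1\<close>]
    by (intro emeasure_mono) auto
  ultimately show ?thesis
    by (rule order_trans[rotated])
qed

end
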